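(* Let $\Omega_D := \{x \in \mathbb{R}^2 : |x| \le 1\}$ and $\Omega_S := [-1,1]\times[0,2\pi)$. Let $\mathcal{E} \in C^2(\mathbb{R})$ satisfy $\mathcal{E}(x) = \exp(-x)$ for all $x \ge 0$, with $|\mathcal{E}|$, $|\mathcal{E}'|$ and $|\mathcal{E}''|$ bounded on $\mathbb{R}$. Let $w \in L_1(\mathbb{R}) \cap L_2(\mathbb{R})$ and let $F : L_2(\Omega_D) \to L_2(\Omega_S)$ be defined by $$F(f)(s,\theta) := \int_{\mathbb{R}} w(r-s)\, \mathcal{E}\Big(\tfrac{1}{2}(Rf)(r,\theta)\Big)\, dr,$$ whose Fréchet derivative at $f \in L_2(\Omega_D)$ is the bounded linear operator $$(F'(f)h)(s,\theta) = \frac{1}{2}\int_{\mathbb{R}} w(r-s)\, \mathcal{E}'\Big(\tfrac{1}{2}(Rf)(r,\theta)\Big)\, (Rh)(r,\theta)\, dr.$$ Then for every $f \in L_2(\Omega_D)$ and $g \in L_2(\Omega_S)$, the Hilbert-space adjoint $F'(f)^* : L_2(\Omega_S) \to L_2(\Omega_D)$ is given by $$(F'(f)^* g)(x,y) = R^*\Big( \tfrac{1}{2}\, \mathcal{E}'\Big(\tfrac{1}{2}(Rf)(s,\theta)\Big) \int_{-1}^{1} w(s-r)\, g(r,\theta)\, dr \Big)(x,y),$$ where the function to which $R^*$ is applied is regarded as a function of the variables $(s,\theta) \in \Omega_S$.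
   Context: Functions $f \in L_2(\Omega_D)$ are extended by zero outside $\Omega_D$. The Radon transform is $(Rf)(s,\theta) = \int_{\mathbb{R}} f(s\,u(\theta) + \sigma\, u(\theta)^\perp)\, d\sigma$ for $s \in \mathbb{R}$, $\theta \in [0,2\pi)$, where $u(\theta) = (\cos\theta, \sin\theta)^T$ and $u(\theta)^\perp$ is the unit vector perpendicular to it. $R : L_2(\Omega_D) \to L_2(\Omega_S)$ is a bounded linear operator with $(Rf)(s,\theta)=0$ for $|s|>1$, and $R^* : L_2(\Omega_S) \to L_2(\Omega_D)$ denotes its adjoint with respect to the $L_2$ inner products. *)

theory Defs
  imports "HOL-Analysis.Analysis"
begin

definition OmegaD :: "(real \<times> real) set" where
  "OmegaD = {x. (fst x)\<^sup>2 + (snd x)\<^sup>2 \<le> 1}"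

definition OmegaS :: "(real \<times> real) set" where
  "OmegaS = {-1..1} \<times> {0..<2*pi}"

text \<open>Elements of L2(Omega_D) / L2(Omega_S), represented by functions extended by zero.\<close>

definition L2D :: "(real \<times> real \<Rightarrow> real) \<Rightarrow> bool" where
  "L2D f \<longleftrightarrow> f \<in> borel_measurable lborel \<and> (\<forall>x. x \<notin> OmegaD \<longrightarrow> f x = 0)
      \<and> integrable lborel (\<lambda>x. (f x)\<^sup>2)"

definition L2S :: "(real \<times> real \<Rightarrow> real) \<Rightarrow> bool" where
  "L2S g \<longleftrightarrow> g \<in> borel_measurable lborel \<and> (\<forall>x. x \<notin> OmegaS \<longrightarrow> g x = 0)
      \<and> integrable lborel (\<lambda>x. (g x)\<^sup>2)"

definition innerD :: "(real \<times> real \<Rightarrow> real) \<Rightarrow> (real \<times> real \<Rightarrow> real) \<Rightarrow> real" where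
  "innerD f h = (LINT x:OmegaD|lborel. f x * h x)"

definition innerS :: "(real \<times> real \<Rightarrow> real) \<Rightarrow> (real \<times> real \<Rightarrow> real) \<Rightarrow> real" where
  "innerS g k = (LINT x:OmegaS|lborel. g x * k x)"

text \<open>Radon transform: (Rf)(s,theta) = int f(s u(theta) + sigma u(theta)^perp) dsigma,
  with u(theta) = (cos theta, sin theta), u(theta)^perp = (-sin theta, cos theta).
  As a map into L2(Omega_S) it is represented by its restriction to Omega_S (extended by zero);
  note (Rf)(s,theta) = 0 for |s| > 1 anyway, since f vanishes outside the unit disk.\<close>

definition Radon :: "(real \<times> real \<Rightarrow> real) \<Rightarrow> (real \<times> real \<Rightarrow> real)" where
  "Radon f = (\<lambda>(s, \<theta>). if (s, \<theta>) \<in> OmegaS then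
      (LINT \<sigma>|lborel. f (s * cos \<theta> - \<sigma> * sin \<theta>, s * sin \<theta> + \<sigma> * cos \<theta>)) else 0)"

definition is_adjoint ::
  "((real \<times> real \<Rightarrow> real) \<Rightarrow> (real \<times> real \<Rightarrow> real)) \<Rightarrow>
   ((real \<times> real \<Rightarrow> real) \<Rightarrow> (real \<times> real \<Rightarrow> real)) \<Rightarrow> bool" where
  "is_adjoint T Tstar \<longleftrightarrow>
     (\<forall>g. L2S g \<longrightarrow> L2D (Tstar g)) \<and>
     (\<forall>h g. L2D h \<longrightarrow> L2S g \<longrightarrow> innerS (T h) g = innerD h (Tstar g))"

definition Fop :: "(real \<Rightarrow> real) \<Rightarrow> (real \<Rightarrow> real) \<Rightarrow> (real \<times> real \<Rightarrow> real) \<Rightarrow> (real \<times> real \<Rightarrow> real)" where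
  "Fop E w f = (\<lambda>(s, \<theta>). if (s, \<theta>) \<in> OmegaS then
      (LINT r|lborel. w (r - s) * E ((1/2) * Radon f (r, \<theta>))) else 0)"

definition Fderiv :: "(real \<Rightarrow> real) \<Rightarrow> (real \<Rightarrow> real) \<Rightarrow> (real \<times> real \<Rightarrow> real) \<Rightarrow>
    (real \<times> real \<Rightarrow> real) \<Rightarrow> (real \<times> real \<Rightarrow> real)" where
  "Fderiv E w f h = (\<lambda>(s, \<theta>). if (s, \<theta>) \<in> OmegaS then
      (1/2) * (LINT r|lborel. w (r - s) * deriv E ((1/2) * Radon f (r, \<theta>)) * Radon h (r, \<theta>))
    else 0)"

definition adj_arg :: "(real \<Rightarrow> real) \<Rightarrow> (real \<Rightarrow> real) \<Rightarrow> (real \<times> real \<Rightarrow> real) \<Rightarrow>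
    (real \<times> real \<Rightarrow> real) \<Rightarrow> (real \<times> real \<Rightarrow> real)" where
  "adj_arg E w f g = (\<lambda>(s, \<theta>). if (s, \<theta>) \<in> OmegaS then
      (1/2) * deriv E ((1/2) * Radon f (s, \<theta>)) * (LINT r:{-1..1}|lborel. w (s - r) * g (r, \<theta>))
    else 0)"

end

theory Submission
  imports Defs
begin

text \<open>
  Write \<open>\<psi>\<^sub>g\<close> for \<open>adj_arg E w f g\<close>. Given the adjointness of \<open>R\<close>, the claim reduces to
  \<open>\<psi>\<^sub>g \<in> L\<^sub>2(\<Omega>\<^sub>S)\<close> and \<open>\<langle>F'(f) h, g\<rangle> = \<langle>R h, \<psi>\<^sub>g\<rangle>\<close>. Both inner products are iterated
  integrals of the same kernel \<open>w(r - s) E'(Rf(r,\<theta>)/2) Rh(r,\<theta>) g(s,\<theta>) / 2\<close>, once in the order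
  \<open>r, s, \<theta>\<close> and once in the order \<open>s, r, \<theta>\<close>, so Fubini's theorem identifies them as soon as the
  kernel is absolutely integrable. By \<open>|xy| \<le> x\<^sup>2 + y\<^sup>2\<close> this needs only \<open>w \<in> L\<^sub>2\<close>, a bound on
  \<open>E'\<close> and \<open>R h \<in> L\<^sub>2(\<Omega>\<^sub>S)\<close>; the last holds because \<open>\<parallel>Rh\<parallel>\<^sup>2 \<le> 4\<pi> \<parallel>h\<parallel>\<^sup>2\<close>, by Cauchy-Schwarz on
  chords of length at most 2 and the rotation invariance of planar Lebesgue measure.
\<close>

lemma borel_measurable_fst[measurable]:
  "fst \<in> borel_measurable (borel :: ('a::second_countable_topology \<times> 'b::second_countable_topology) measure)"
  by (simp add: borel_prod[symmetric])

lemma borel_measurable_snd[measurable]: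
  "snd \<in> borel_measurable (borel :: ('a::second_countable_topology \<times> 'b::second_countable_topology) measure)"
  by (simp add: borel_prod[symmetric])

lemma abs_integral_le_nn_integral:
  fixes f :: "'a \<Rightarrow> real"
  shows "ennreal \<bar>integral\<^sup>L M f\<bar> \<le> (\<integral>\<^sup>+x. \<bar>f x\<bar> \<partial>M)"
  using integral_norm_bound_ennreal[of M f]
  by (cases "integrable M f") (simp_all add: not_integrable_integral_eq)

lemma Cauchy_Schwarz_integral_ennreal:
  fixes f g :: "'a \<Rightarrow> real"
  assumes [measurable]: "f \<in> borel_measurable M" "g \<in> borel_measurable M"
  shows "ennreal ((\<integral>x. f x * g x \<partial>M)\<^sup>2) \<le> (\<integral>\<^sup>+x. (f x)\<^sup>2 \<partial>M) * (\<integral>\<^sup>+x. (g x)\<^sup>2 \<partial>M)"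
proof (cases "integrable M (\<lambda>x. f x * g x)")
  case True
  have "ennreal ((\<integral>x. f x * g x \<partial>M)\<^sup>2) = (ennreal \<bar>\<integral>x. f x * g x \<partial>M\<bar>)\<^sup>2"
    by (simp add: ennreal_power)
  also have "\<dots> \<le> (\<integral>\<^sup>+x. ennreal \<bar>f x\<bar> * ennreal \<bar>g x\<bar> \<partial>M)\<^sup>2"
    using integral_norm_bound_ennreal[OF True]
    by (intro power_mono) (simp_all add: abs_mult ennreal_mult)
  also have "\<dots> \<le> (\<integral>\<^sup>+x. (ennreal \<bar>f x\<bar>)\<^sup>2 \<partial>M) * (\<integral>\<^sup>+x. (ennreal \<bar>g x\<bar>)\<^sup>2 \<partial>M)"
    by (rule Cauchy_Schwarz_nn_integral) auto
  finally show ?thesis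
    by (simp add: ennreal_power)
qed (simp add: not_integrable_integral_eq)

lemma square_integral_le_support_length:
  fixes G :: "real \<Rightarrow> real" and a b :: real
  assumes [measurable]: "G \<in> borel_measurable borel" and "a \<le> b"
    and vanish: "\<And>x. x \<notin> {a..b} \<Longrightarrow> G x = 0"
  shows "ennreal ((\<integral>x. G x \<partial>lborel)\<^sup>2) \<le> ennreal (b - a) * (\<integral>\<^sup>+x. (G x)\<^sup>2 \<partial>lborel)"
proof -
  have "(\<integral>x. G x \<partial>lborel) = (\<integral>x. indicator {a..b} x * G x \<partial>lborel)"
    using vanish by (intro Bochner_Integration.integral_cong) (auto simp: indicator_def)
  then have "ennreal ((\<integral>x. G x \<partial>lborel)\<^sup>2)
      \<le> (\<integral>\<^sup>+x. (indicator {a..b} x :: real)\<^sup>2 \<partial>lborel) * (\<integral>\<^sup>+x. (G x)\<^sup>2 \<partial>lborel)"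
    using Cauchy_Schwarz_integral_ennreal[of "indicator {a..b}" lborel G] by simp
  also have "(\<integral>\<^sup>+x. (indicator {a..b} x :: real)\<^sup>2 \<partial>lborel) = (\<integral>\<^sup>+x. indicator {a..b} x \<partial>lborel)"
    by (intro nn_integral_cong) (simp add: indicator_def)
  also have "\<dots> = ennreal (b - a)"
    using \<open>a \<le> b\<close> by simp
  finally show ?thesis .
qed

lemma ennreal_square_mult_le:
  fixes u y K :: real
  assumes "\<bar>u\<bar> \<le> K"
  shows "ennreal ((u * y)\<^sup>2) \<le> ennreal (K\<^sup>2) * ennreal (y\<^sup>2)"
proof -
  have "u\<^sup>2 \<le> K\<^sup>2"
    using power_mono[OF assms abs_ge_zero, of 2] by simp
  then have "(u * y)\<^sup>2 \<le> K\<^sup>2 * y\<^sup>2"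
    by (simp add: power_mult_distrib mult_right_mono)
  then show ?thesis
    by (simp add: ennreal_mult'[symmetric] ennreal_leI)
qed

lemma abs_mult_le_sum_squares:
  fixes x y :: real
  shows "\<bar>x * y\<bar> \<le> x\<^sup>2 + y\<^sup>2"
proof -
  have "2 * (\<bar>x\<bar> * \<bar>y\<bar>) \<le> x\<^sup>2 + y\<^sup>2" "0 \<le> \<bar>x\<bar> * \<bar>y\<bar>"
    using sum_squares_bound[of "\<bar>x\<bar>" "\<bar>y\<bar>"] by (simp_all add: mult.assoc)
  then show ?thesis
    unfolding abs_mult by linarith
qed

section \<open>Rotation invariance of planar Lebesgue measure\<close>

lemma nn_integral_lborel_shear_fst:
  fixes F :: "real \<times> real \<Rightarrow> ennreal"
  assumes [measurable]: "F \<in> borel_measurable borel" "\<phi> \<in> borel_measurable borel"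
  shows "(\<integral>\<^sup>+p. F (fst p + \<phi> (snd p), snd p) \<partial>lborel) = integral\<^sup>N lborel F"
proof -
  have F: "F \<in> borel_measurable (lborel \<Otimes>\<^sub>M lborel)"
    and F_shear: "(\<lambda>p. F (fst p + \<phi> (snd p), snd p)) \<in> borel_measurable (lborel \<Otimes>\<^sub>M lborel)"
    unfolding lborel_prod measurable_lborel2 by measurable
  have "(\<integral>\<^sup>+p. F (fst p + \<phi> (snd p), snd p) \<partial>lborel) = (\<integral>\<^sup>+y. \<integral>\<^sup>+x. F (x + \<phi> y, y) \<partial>lborel \<partial>lborel)"
    using lborel_pair.nn_integral_snd[OF F_shear] by (simp add: lborel_prod)
  also have "\<dots> = (\<integral>\<^sup>+y. \<integral>\<^sup>+x. F (x, y) \<partial>lborel \<partial>lborel)"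
  proof (rule nn_integral_cong)
    fix y
    show "(\<integral>\<^sup>+x. F (x + \<phi> y, y) \<partial>lborel) = (\<integral>\<^sup>+x. F (x, y) \<partial>lborel)"
      using nn_integral_real_affine[of "\<lambda>x. F (x, y)" 1 "\<phi> y"] by (simp add: add.commute)
  qed
  also have "\<dots> = integral\<^sup>N lborel F"
    using lborel_pair.nn_integral_snd[OF F] by (simp add: lborel_prod)
  finally show ?thesis .
qed

lemma nn_integral_lborel_shear_snd:
  fixes F :: "real \<times> real \<Rightarrow> ennreal"
  assumes [measurable]: "F \<in> borel_measurable borel" "\<phi> \<in> borel_measurable borel"
  shows "(\<integral>\<^sup>+p. F (fst p, snd p + \<phi> (fst p)) \<partial>lborel) = integral\<^sup>N lborel F"
proof -
  have F: "F \<in> borel_measurable (lborel \<Otimes>\<^sub>M lborel)"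
    and F_shear: "(\<lambda>p. F (fst p, snd p + \<phi> (fst p))) \<in> borel_measurable (lborel \<Otimes>\<^sub>M lborel)"
    unfolding lborel_prod measurable_lborel2 by measurable
  have "(\<integral>\<^sup>+p. F (fst p, snd p + \<phi> (fst p)) \<partial>lborel) = (\<integral>\<^sup>+x. \<integral>\<^sup>+y. F (x, y + \<phi> x) \<partial>lborel \<partial>lborel)"
    using lborel.nn_integral_fst[OF F_shear] by (simp add: lborel_prod)
  also have "\<dots> = (\<integral>\<^sup>+x. \<integral>\<^sup>+y. F (x, y) \<partial>lborel \<partial>lborel)"
  proof (rule nn_integral_cong)
    fix x
    show "(\<integral>\<^sup>+y. F (x, y + \<phi> x) \<partial>lborel) = (\<integral>\<^sup>+y. F (x, y) \<partial>lborel)"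
      using nn_integral_real_affine[of "\<lambda>y. F (x, y)" 1 "\<phi> x"] by (simp add: add.commute)
  qed
  also have "\<dots> = integral\<^sup>N lborel F"
    using lborel.nn_integral_fst[OF F] by (simp add: lborel_prod)
  finally show ?thesis .
qed

definition rot :: "real \<Rightarrow> real \<times> real \<Rightarrow> real \<times> real" where
  "rot t p = (fst p * cos t - snd p * sin t, fst p * sin t + snd p * cos t)"

lemma rot_add: "rot (s + t) p = rot s (rot t p)"
  by (simp add: rot_def cos_add sin_add algebra_simps)

lemma rot_norm: "(fst (rot t p))\<^sup>2 + (snd (rot t p))\<^sup>2 = (fst p)\<^sup>2 + (snd p)\<^sup>2"
proof -
  have "(sin t)\<^sup>2 + (cos t)\<^sup>2 = 1" by simp
  then show ?thesis unfolding rot_def power2_eq_square fst_conv snd_conv by algebra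
qed

lemma borel_measurable_rot[measurable (raw)]:
  assumes [measurable]: "f \<in> borel_measurable M" "g \<in> borel_measurable M"
  shows "(\<lambda>x. rot (f x) (g x)) \<in> borel_measurable M"
  unfolding rot_def by measurable

text \<open>Paeth's decomposition: the rotation by \<open>t\<close> is the composite of the shears
  \<open>(x, y) \<mapsto> (x + a y, y)\<close>, \<open>(x, y) \<mapsto> (x, y + sin t x)\<close> and again \<open>(x, y) \<mapsto> (x + a y, y)\<close>.\<close>

lemma rot_eq_shears:
  assumes "cos (t/2) \<noteq> 0"
  defines "a \<equiv> - tan (t/2)"
  shows "rot t (x, y) = (x + a*y + a*(y + sin t*(x + a*y)), y + sin t*(x + a*y))"
proof -
  define cn where "cn = cos (t/2)"
  define sn where "sn = sin (t/2)"
  have "cn\<^sup>2 + sn\<^sup>2 = 1" by (simp add: cn_def sn_def)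
  moreover have "sin t = 2 * sn * cn" "cos t = 1 - 2 * sn\<^sup>2"
    using sin_double[of "t/2"] cos_double_sin[of "t/2"] by (simp_all add: cn_def sn_def)
  moreover have "a = - sn / cn" by (simp add: a_def cn_def sn_def tan_def)
  ultimately show ?thesis using assms(1) unfolding rot_def cn_def[symmetric]
    by (simp add: field_simps power2_eq_square) algebra
qed

lemma nn_integral_lborel_rot:
  fixes F :: "real \<times> real \<Rightarrow> ennreal"
  assumes [measurable]: "F \<in> borel_measurable borel"
  shows "(\<integral>\<^sup>+p. F (rot t p) \<partial>lborel) = integral\<^sup>N lborel F"
proof -
  have shears: "(\<integral>\<^sup>+p. F (rot t p) \<partial>lborel) = integral\<^sup>N lborel F"
    if "cos (t/2) \<noteq> 0" and [measurable]: "F \<in> borel_measurable borel" for t F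
  proof -
    define a where "a = - tan (t/2)"
    define G where "G = (\<lambda>q. F (fst q + a * snd q, snd q))"
    define H where "H = (\<lambda>q. G (fst q, snd q + sin t * fst q))"
    have [measurable]: "G \<in> borel_measurable borel" "H \<in> borel_measurable borel"
      unfolding G_def H_def by measurable
    have "F (rot t p) = H (fst p + a * snd p, snd p)" for p
      using rot_eq_shears[OF that(1)] by (cases p) (simp add: G_def H_def a_def)
    then have "(\<integral>\<^sup>+p. F (rot t p) \<partial>lborel) = (\<integral>\<^sup>+p. H (fst p + a * snd p, snd p) \<partial>lborel)"
      by simp
    also have "\<dots> = integral\<^sup>N lborel H"
      using nn_integral_lborel_shear_fst[of H "\<lambda>y. a * y"] by simp
    also have "\<dots> = integral\<^sup>N lborel G"
      using nn_integral_lborel_shear_snd[of G "\<lambda>x. sin t * x"] by (simp add: H_def)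
    also have "\<dots> = integral\<^sup>N lborel F"
      using nn_integral_lborel_shear_fst[of F "\<lambda>y. a * y"] by (simp add: G_def)
    finally show ?thesis .
  qed
  show ?thesis
  proof (cases "cos (t/2) = 0")
    case True
    \<comment> \<open>a half-turn is the composite of two quarter-turns, which do decompose into shears\<close>
    then have "cos (t/2/2) \<noteq> 0"
      using cos_double_cos[of "t/2/2"] by auto
    then show ?thesis
      using shears[of "t/2" "\<lambda>p. F (rot (t/2) p)"] shears[of "t/2" F] rot_add[of "t/2" "t/2"]
      by simp
  qed (simp add: shears)
qed

section \<open>Iterated integrals in three variables\<close>

lemma borel_measurable_uncurry3:
  fixes k :: "real \<Rightarrow> real \<Rightarrow> real \<Rightarrow> real"
  assumes k: "(\<lambda>(x, y, z). k x y z) \<in> borel_measurable borel"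
    and [measurable]: "a \<in> borel_measurable M" "b \<in> borel_measurable M" "c \<in> borel_measurable M"
  shows "(\<lambda>x. k (a x) (b x) (c x)) \<in> borel_measurable M"
proof -
  have "(\<lambda>x. (a x, b x, c x)) \<in> borel_measurable M"
    by measurable
  from measurable_compose[OF this k] show ?thesis
    by simp
qed

lemma integral_lborel_partial_integral:
  fixes k :: "real \<Rightarrow> real \<Rightarrow> real \<Rightarrow> real"
  assumes k_measurable: "(\<lambda>(\<theta>, s, r). k \<theta> s r) \<in> borel_measurable borel"
    and k_finite: "(\<integral>\<^sup>+\<theta>. \<integral>\<^sup>+s. \<integral>\<^sup>+r. \<bar>k \<theta> s r\<bar> \<partial>lborel \<partial>lborel \<partial>lborel) < \<infinity>"
  shows "integral\<^sup>L lborel (\<lambda>(s, \<theta>). \<integral>r. k \<theta> s r \<partial>lborel) = (\<integral>\<theta>. \<integral>s. \<integral>r. k \<theta> s r \<partial>lborel \<partial>lborel \<partial>lborel)"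
proof -
  note borel_measurable_uncurry3[OF k_measurable, measurable (raw)]
  define \<Phi> where "\<Phi> = (\<lambda>(s, \<theta>). \<integral>r. k \<theta> s r \<partial>lborel)"
  have \<Phi>_measurable: "\<Phi> \<in> borel_measurable (lborel \<Otimes>\<^sub>M lborel)"
    unfolding \<Phi>_def lborel_prod measurable_lborel2 case_prod_beta by measurable
  have "(\<integral>\<^sup>+p. norm (\<Phi> p) \<partial>(lborel \<Otimes>\<^sub>M lborel)) \<le> (\<integral>\<^sup>+p. \<integral>\<^sup>+r. \<bar>k (snd p) (fst p) r\<bar> \<partial>lborel \<partial>(lborel \<Otimes>\<^sub>M lborel))"
    unfolding \<Phi>_def case_prod_beta
    by (intro nn_integral_mono) (simp add: abs_integral_le_nn_integral)
  also have "\<dots> = (\<integral>\<^sup>+\<theta>. \<integral>\<^sup>+s. \<integral>\<^sup>+r. \<bar>k \<theta> s r\<bar> \<partial>lborel \<partial>lborel \<partial>lborel)"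
    by (subst lborel_pair.nn_integral_snd[symmetric])
      (simp_all add: lborel_prod, measurable)
  finally have "integrable (lborel \<Otimes>\<^sub>M lborel) \<Phi>"
    using k_finite \<Phi>_measurable by (simp add: integrable_iff_bounded)
  then show ?thesis
    using lborel_pair.integral_snd[of "\<lambda>s \<theta>. \<Phi> (s, \<theta>)"] by (simp add: \<Phi>_def lborel_prod)
qed

lemma integral_lborel_partial_integral_swap:
  fixes k :: "real \<Rightarrow> real \<Rightarrow> real \<Rightarrow> real"
  assumes k_measurable: "(\<lambda>(\<theta>, s, r). k \<theta> s r) \<in> borel_measurable borel"
    and k_finite: "(\<integral>\<^sup>+\<theta>. \<integral>\<^sup>+s. \<integral>\<^sup>+r. \<bar>k \<theta> s r\<bar> \<partial>lborel \<partial>lborel \<partial>lborel) < \<infinity>"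
  shows "integral\<^sup>L lborel (\<lambda>(s, \<theta>). \<integral>r. k \<theta> s r \<partial>lborel)
    = integral\<^sup>L lborel (\<lambda>(r, \<theta>). \<integral>s. k \<theta> s r \<partial>lborel)"
proof -
  note borel_measurable_uncurry3[OF k_measurable, measurable (raw)]
  have slice_measurable: "(\<lambda>(s, r). ennreal \<bar>k \<theta> s r\<bar>) \<in> borel_measurable (lborel \<Otimes>\<^sub>M lborel)" for \<theta>
    unfolding lborel_prod measurable_lborel2 case_prod_beta by measurable
  have swap: "(\<integral>\<^sup>+r. \<integral>\<^sup>+s. \<bar>k \<theta> s r\<bar> \<partial>lborel \<partial>lborel) = (\<integral>\<^sup>+s. \<integral>\<^sup>+r. \<bar>k \<theta> s r\<bar> \<partial>lborel \<partial>lborel)" for \<theta>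
    using lborel_pair.Fubini'[OF slice_measurable] .
  have swapped_measurable: "(\<lambda>(\<theta>, r, s). k \<theta> s r) \<in> borel_measurable borel"
    by measurable
  have "(\<integral>\<^sup>+\<theta>. \<integral>\<^sup>+s. \<integral>\<^sup>+r. \<bar>k \<theta> s r\<bar> \<partial>lborel \<partial>lborel \<partial>lborel) \<noteq> \<infinity>"
    using k_finite by simp
  then have "AE \<theta> in lborel. (\<integral>\<^sup>+s. \<integral>\<^sup>+r. \<bar>k \<theta> s r\<bar> \<partial>lborel \<partial>lborel) \<noteq> \<infinity>"
    by (intro nn_integral_PInf_AE) measurable
  then have "AE \<theta> in lborel. (\<integral>s. \<integral>r. k \<theta> s r \<partial>lborel \<partial>lborel) = (\<integral>r. \<integral>s. k \<theta> s r \<partial>lborel \<partial>lborel)"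
  proof (rule AE_mp, intro AE_I2 impI)
    fix \<theta>
    assume "(\<integral>\<^sup>+s. \<integral>\<^sup>+r. \<bar>k \<theta> s r\<bar> \<partial>lborel \<partial>lborel) \<noteq> \<infinity>"
    moreover have "(\<lambda>(s, r). k \<theta> s r) \<in> borel_measurable (lborel \<Otimes>\<^sub>M lborel)"
      unfolding lborel_prod measurable_lborel2 case_prod_beta by measurable
    ultimately have "integrable (lborel \<Otimes>\<^sub>M lborel) (\<lambda>(s, r). k \<theta> s r)"
      using lborel.nn_integral_fst[OF slice_measurable]
      by (simp add: integrable_iff_bounded case_prod_beta' top.not_eq_extremum)
    then show "(\<integral>s. \<integral>r. k \<theta> s r \<partial>lborel \<partial>lborel) = (\<integral>r. \<integral>s. k \<theta> s r \<partial>lborel \<partial>lborel)"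
      by (rule lborel_pair.Fubini_integral[symmetric])
  qed
  moreover have "(\<integral>\<^sup>+\<theta>. \<integral>\<^sup>+r. \<integral>\<^sup>+s. \<bar>k \<theta> s r\<bar> \<partial>lborel \<partial>lborel \<partial>lborel) < \<infinity>"
    using k_finite by (simp add: swap)
  ultimately show ?thesis
    using integral_lborel_partial_integral[OF k_measurable k_finite]
      integral_lborel_partial_integral[of "\<lambda>\<theta> r s. k \<theta> s r", OF swapped_measurable]
    by (simp add: integral_cong_AE)
qed

lemma nn_integral_convolution_product_le:
  fixes w \<alpha> \<gamma> :: "real \<Rightarrow> real"
  assumes [measurable]: "w \<in> borel_measurable borel" "\<alpha> \<in> borel_measurable borel"
    "\<gamma> \<in> borel_measurable borel" "A \<in> sets borel"
    and \<alpha>_vanishes: "\<And>r. r \<notin> A \<Longrightarrow> \<alpha> r = 0"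
  shows "(\<integral>\<^sup>+s. \<integral>\<^sup>+r. \<bar>w (r - s) * \<alpha> r * \<gamma> s\<bar> \<partial>lborel \<partial>lborel)
    \<le> (\<integral>\<^sup>+x. (w x)\<^sup>2 \<partial>lborel) * (\<integral>\<^sup>+r. (\<alpha> r)\<^sup>2 \<partial>lborel) + emeasure lborel A * (\<integral>\<^sup>+s. (\<gamma> s)\<^sup>2 \<partial>lborel)"
proof -
  have "ennreal \<bar>w (r - s) * \<alpha> r * \<gamma> s\<bar>
      \<le> ennreal ((w (r - s))\<^sup>2 * (\<alpha> r)\<^sup>2) + indicator A r * ennreal ((\<gamma> s)\<^sup>2)" for s r
    using abs_mult_le_sum_squares[of "w (r - s) * \<alpha> r" "\<gamma> s"] \<alpha>_vanishes[of r]
    by (cases "r \<in> A") (simp_all add: ennreal_plus[symmetric] power_mult_distrib del: ennreal_plus)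
  then have "(\<integral>\<^sup>+s. \<integral>\<^sup>+r. \<bar>w (r - s) * \<alpha> r * \<gamma> s\<bar> \<partial>lborel \<partial>lborel)
      \<le> (\<integral>\<^sup>+s. \<integral>\<^sup>+r. ennreal ((w (r - s))\<^sup>2 * (\<alpha> r)\<^sup>2) \<partial>lborel \<partial>lborel)
        + (\<integral>\<^sup>+s. \<integral>\<^sup>+r. indicator A r * ennreal ((\<gamma> s)\<^sup>2) \<partial>lborel \<partial>lborel)"
    by (subst nn_integral_add[symmetric], measurable, intro nn_integral_mono,
        subst nn_integral_add[symmetric], measurable, intro nn_integral_mono) auto
  also have "(\<integral>\<^sup>+s. \<integral>\<^sup>+r. ennreal ((w (r - s))\<^sup>2 * (\<alpha> r)\<^sup>2) \<partial>lborel \<partial>lborel)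
      = (\<integral>\<^sup>+r. (\<integral>\<^sup>+s. (w (r - s))\<^sup>2 \<partial>lborel) * (\<alpha> r)\<^sup>2 \<partial>lborel)"
    by (subst lborel_pair.Fubini') (simp_all add: ennreal_mult' lborel_prod case_prod_beta' nn_integral_multc)
  also have "\<dots> = (\<integral>\<^sup>+x. (w x)\<^sup>2 \<partial>lborel) * (\<integral>\<^sup>+r. (\<alpha> r)\<^sup>2 \<partial>lborel)"
  proof -
    have "(\<integral>\<^sup>+s. (w (r - s))\<^sup>2 \<partial>lborel) = (\<integral>\<^sup>+x. (w x)\<^sup>2 \<partial>lborel)" for r
      using nn_integral_real_affine[of "\<lambda>x. ennreal ((w x)\<^sup>2)" "-1" r] by simp
    then show ?thesis
      by (simp add: nn_integral_cmult)
  qed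
  also have "(\<integral>\<^sup>+s. \<integral>\<^sup>+r. indicator A r * ennreal ((\<gamma> s)\<^sup>2) \<partial>lborel \<partial>lborel)
      = emeasure lborel A * (\<integral>\<^sup>+s. (\<gamma> s)\<^sup>2 \<partial>lborel)"
    by (simp add: nn_integral_multc nn_integral_cmult)
  finally show ?thesis .
qed

lemma nn_integral_lborel_convolution_product_finite:
  fixes w :: "real \<Rightarrow> real" and a g :: "real \<times> real \<Rightarrow> real"
  assumes [measurable]: "w \<in> borel_measurable borel" "a \<in> borel_measurable borel"
    "g \<in> borel_measurable borel" "A \<in> sets borel"
    and A_finite: "emeasure lborel A < \<infinity>"
    and w_finite: "(\<integral>\<^sup>+x. (w x)\<^sup>2 \<partial>lborel) < \<infinity>"
    and a_finite: "(\<integral>\<^sup>+p. (a p)\<^sup>2 \<partial>lborel) < \<infinity>"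
    and g_finite: "(\<integral>\<^sup>+p. (g p)\<^sup>2 \<partial>lborel) < \<infinity>"
    and a_vanishes: "\<And>r \<theta>. r \<notin> A \<Longrightarrow> a (r, \<theta>) = 0"
  shows "(\<integral>\<^sup>+\<theta>. \<integral>\<^sup>+s. \<integral>\<^sup>+r. \<bar>w (r - s) * a (r, \<theta>) * g (s, \<theta>)\<bar> \<partial>lborel \<partial>lborel \<partial>lborel) < \<infinity>"
proof -
  let ?W = "\<integral>\<^sup>+x. (w x)\<^sup>2 \<partial>lborel"
  have square_measurable: "(\<lambda>p. ennreal ((u p)\<^sup>2)) \<in> borel_measurable (lborel \<Otimes>\<^sub>M lborel)"
    if "u \<in> borel_measurable borel" for u :: "real \<times> real \<Rightarrow> real"
    using that unfolding lborel_prod measurable_lborel2 by measurable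
  have "(\<integral>\<^sup>+\<theta>. \<integral>\<^sup>+s. \<integral>\<^sup>+r. \<bar>w (r - s) * a (r, \<theta>) * g (s, \<theta>)\<bar> \<partial>lborel \<partial>lborel \<partial>lborel)
      \<le> (\<integral>\<^sup>+\<theta>. ?W * (\<integral>\<^sup>+r. (a (r, \<theta>))\<^sup>2 \<partial>lborel) + emeasure lborel A * (\<integral>\<^sup>+s. (g (s, \<theta>))\<^sup>2 \<partial>lborel) \<partial>lborel)"
    using a_vanishes
    by (intro nn_integral_mono nn_integral_convolution_product_le[where A=A]) simp_all
  also have "\<dots> = ?W * (\<integral>\<^sup>+p. (a p)\<^sup>2 \<partial>lborel) + emeasure lborel A * (\<integral>\<^sup>+p. (g p)\<^sup>2 \<partial>lborel)"
    using lborel_pair.nn_integral_snd[OF square_measurable, of a]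
      lborel_pair.nn_integral_snd[OF square_measurable, of g]
    by (simp add: nn_integral_add nn_integral_cmult lborel_prod)
  also have "\<dots> < \<infinity>"
    using A_finite w_finite a_finite g_finite by (simp add: ennreal_mult_less_top)
  finally show ?thesis .
qed

lemma square_set_integral_convolution_le:
  fixes w g :: "real \<Rightarrow> real"
  assumes [measurable]: "w \<in> borel_measurable borel" "g \<in> borel_measurable borel" "A \<in> sets borel"
  shows "ennreal ((LINT r:A|lborel. w (s - r) * g r)\<^sup>2)
    \<le> (\<integral>\<^sup>+x. (w x)\<^sup>2 \<partial>lborel) * (\<integral>\<^sup>+x. (g x)\<^sup>2 \<partial>lborel)"
proof -
  have "ennreal ((LINT r:A|lborel. w (s - r) * g r)\<^sup>2)
      \<le> (\<integral>\<^sup>+r. (indicator A r * w (s - r))\<^sup>2 \<partial>lborel) * (\<integral>\<^sup>+x. (g x)\<^sup>2 \<partial>lborel)"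
    using Cauchy_Schwarz_integral_ennreal[of "\<lambda>r. indicator A r * w (s - r)" lborel g]
    by (simp add: set_lebesgue_integral_def mult.assoc)
  also have "(\<integral>\<^sup>+r. (indicator A r * w (s - r))\<^sup>2 \<partial>lborel) \<le> (\<integral>\<^sup>+r. (w (s - r))\<^sup>2 \<partial>lborel)"
    by (intro nn_integral_mono) (simp add: indicator_def)
  also have "\<dots> = (\<integral>\<^sup>+x. (w x)\<^sup>2 \<partial>lborel)"
    using nn_integral_real_affine[of "\<lambda>x. ennreal ((w x)\<^sup>2)" "-1" s] by simp
  finally show ?thesis
    by (simp add: mult_right_mono)
qed

section \<open>The Radon transform on the unit disc\<close>

lemma Radon_eq: "Radon h (s, \<theta>) = (if (s, \<theta>) \<in> OmegaS then \<integral>\<sigma>. h (rot \<theta> (s, \<sigma>)) \<partial>lborel else 0)"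
  by (simp add: Radon_def rot_def)

lemma sets_OmegaS[measurable]: "OmegaS \<in> sets borel"
  unfolding OmegaS_def by (intro borel_Times) auto

lemma borel_measurable_Radon[measurable]:
  assumes [measurable]: "h \<in> borel_measurable borel"
  shows "Radon h \<in> borel_measurable borel"
proof -
  have "Radon h = (\<lambda>p. if p \<in> OmegaS then \<integral>\<sigma>. h (rot (snd p) (fst p, \<sigma>)) \<partial>lborel else 0)"
    by (auto simp: Radon_eq)
  also have "\<dots> \<in> borel_measurable borel"
    by measurable
  finally show ?thesis .
qed

lemma L2D_vanishes: "L2D h \<Longrightarrow> 1 < (fst p)\<^sup>2 + (snd p)\<^sup>2 \<Longrightarrow> h p = 0"
  by (cases p) (auto simp: L2D_def OmegaD_def)

lemma square_Radon_le_chord_integral: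
  assumes "L2D h"
  shows "ennreal ((Radon h (s, \<theta>))\<^sup>2)
    \<le> indicator {0..2*pi} \<theta> * (2 * \<integral>\<^sup>+\<sigma>. (h (rot \<theta> (s, \<sigma>)))\<^sup>2 \<partial>lborel)"
proof (cases "(s, \<theta>) \<in> OmegaS")
  case True
  have [measurable]: "h \<in> borel_measurable borel"
    using assms by (simp add: L2D_def)
  have "ennreal ((\<integral>\<sigma>. h (rot \<theta> (s, \<sigma>)) \<partial>lborel)\<^sup>2)
      \<le> ennreal (1 - (-1)) * (\<integral>\<^sup>+\<sigma>. (h (rot \<theta> (s, \<sigma>)))\<^sup>2 \<partial>lborel)"
  proof (rule square_integral_le_support_length)
    fix \<sigma> :: real
    assume "\<sigma> \<notin> {-1..1}"
    then have "1 < \<sigma>\<^sup>2"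
      using one_less_power[of "\<bar>\<sigma>\<bar>" 2] by auto
    then have "1 < (fst (rot \<theta> (s, \<sigma>)))\<^sup>2 + (snd (rot \<theta> (s, \<sigma>)))\<^sup>2"
      using zero_le_power2[of s] by (simp only: rot_norm fst_conv snd_conv)
    then show "h (rot \<theta> (s, \<sigma>)) = 0"
      using assms by (rule L2D_vanishes[rotated])
  qed simp_all
  moreover have "\<theta> \<in> {0..2*pi}"
    using True by (auto simp: OmegaS_def)
  ultimately show ?thesis
    using True by (simp add: Radon_eq)
qed (simp add: Radon_eq)

lemma nn_integral_square_Radon_le:
  assumes "L2D h"
  shows "(\<integral>\<^sup>+p. (Radon h p)\<^sup>2 \<partial>lborel) \<le> ennreal (4 * pi) * (\<integral>\<^sup>+x. (h x)\<^sup>2 \<partial>lborel)"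
proof -
  have [measurable]: "h \<in> borel_measurable borel"
    using assms by (simp add: L2D_def)
  define B where "B p = indicator {0..2*pi} (snd p) * (2 * \<integral>\<^sup>+\<sigma>. (h (rot (snd p) (fst p, \<sigma>)))\<^sup>2 \<partial>lborel)"
    for p :: "real \<times> real"
  have B_measurable: "B \<in> borel_measurable (lborel \<Otimes>\<^sub>M lborel)"
    unfolding B_def lborel_prod measurable_lborel2 by measurable
  have "(\<integral>\<^sup>+p. (Radon h p)\<^sup>2 \<partial>lborel) \<le> (\<integral>\<^sup>+p. B p \<partial>lborel)"
    using square_Radon_le_chord_integral[OF assms] by (intro nn_integral_mono) (auto simp: B_def)
  also have "\<dots> = (\<integral>\<^sup>+\<theta>. \<integral>\<^sup>+s. B (s, \<theta>) \<partial>lborel \<partial>lborel)"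
    using lborel_pair.nn_integral_snd[OF B_measurable] by (simp add: lborel_prod)
  also have "\<dots> = (\<integral>\<^sup>+\<theta>. indicator {0..2*pi} \<theta> * (2 * \<integral>\<^sup>+x. (h x)\<^sup>2 \<partial>lborel) \<partial>lborel)"
  proof (intro nn_integral_cong)
    fix \<theta> :: real
    have rot_measurable: "(\<lambda>q. ennreal ((h (rot \<theta> q))\<^sup>2)) \<in> borel_measurable (lborel \<Otimes>\<^sub>M lborel)"
      unfolding lborel_prod measurable_lborel2 by measurable
    have "(\<integral>\<^sup>+s. B (s, \<theta>) \<partial>lborel)
        = indicator {0..2*pi} \<theta> * (2 * \<integral>\<^sup>+s. \<integral>\<^sup>+\<sigma>. (h (rot \<theta> (s, \<sigma>)))\<^sup>2 \<partial>lborel \<partial>lborel)"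
      by (simp add: B_def nn_integral_cmult)
    also have "(\<integral>\<^sup>+s. \<integral>\<^sup>+\<sigma>. (h (rot \<theta> (s, \<sigma>)))\<^sup>2 \<partial>lborel \<partial>lborel) = (\<integral>\<^sup>+q. (h (rot \<theta> q))\<^sup>2 \<partial>lborel)"
      using lborel.nn_integral_fst[OF rot_measurable] by (simp add: lborel_prod)
    also have "\<dots> = (\<integral>\<^sup>+x. (h x)\<^sup>2 \<partial>lborel)"
      by (rule nn_integral_lborel_rot) measurable
    finally show "(\<integral>\<^sup>+s. B (s, \<theta>) \<partial>lborel) = indicator {0..2*pi} \<theta> * (2 * \<integral>\<^sup>+x. (h x)\<^sup>2 \<partial>lborel)" .
  qed
  also have "\<dots> = ennreal (4 * pi) * (\<integral>\<^sup>+x. (h x)\<^sup>2 \<partial>lborel)"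
    by (simp add: nn_integral_multc ennreal_mult' mult.assoc mult.left_commute[of "ennreal pi"])
  finally show ?thesis .
qed

section \<open>The adjoint of the linearised operator\<close>

lemma borel_measurable_adj_arg[measurable]:
  assumes [measurable]: "deriv E \<in> borel_measurable borel" "w \<in> borel_measurable borel"
    "f \<in> borel_measurable borel" "g \<in> borel_measurable borel"
  shows "adj_arg E w f g \<in> borel_measurable borel"
proof -
  have "adj_arg E w f g = (\<lambda>p. if p \<in> OmegaS then (1/2) * deriv E ((1/2) * Radon f p)
      * (\<integral>r. indicator {-1..1} r * (w (fst p - r) * g (r, snd p)) \<partial>lborel) else 0)"
    by (auto simp: adj_arg_def set_lebesgue_integral_def)
  also have "\<dots> \<in> borel_measurable borel"
    by measurable
  finally show ?thesis .
qed

lemma square_adj_arg_le: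
  assumes E'_le: "\<And>x. \<bar>deriv E x\<bar> \<le> K"
    and [measurable]: "w \<in> borel_measurable borel" "g \<in> borel_measurable borel"
  shows "ennreal ((adj_arg E w f g (s, \<theta>))\<^sup>2)
    \<le> indicator {-1..1} s * (ennreal ((K / 2)\<^sup>2) * (\<integral>\<^sup>+x. (w x)\<^sup>2 \<partial>lborel) * (\<integral>\<^sup>+r. (g (r, \<theta>))\<^sup>2 \<partial>lborel))"
proof (cases "(s, \<theta>) \<in> OmegaS")
  case True
  let ?C = "LINT r:{-1..1}|lborel. w (s - r) * g (r, \<theta>)"
  have "adj_arg E w f g (s, \<theta>) = (1/2) * deriv E ((1/2) * Radon f (s, \<theta>)) * ?C"
    using True by (simp add: adj_arg_def)
  then have "ennreal ((adj_arg E w f g (s, \<theta>))\<^sup>2) \<le> ennreal ((K / 2)\<^sup>2) * ennreal (?C\<^sup>2)"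
    using E'_le by (simp only:) (intro ennreal_square_mult_le, simp)
  also have "\<dots> \<le> ennreal ((K / 2)\<^sup>2) * ((\<integral>\<^sup>+x. (w x)\<^sup>2 \<partial>lborel) * (\<integral>\<^sup>+r. (g (r, \<theta>))\<^sup>2 \<partial>lborel))"
    using square_set_integral_convolution_le[of w "\<lambda>r. g (r, \<theta>)" "{-1..1}" s]
    by (intro mult_left_mono) simp_all
  finally show ?thesis
    using True by (auto simp: OmegaS_def mult.assoc)
qed (simp add: adj_arg_def)

lemma L2S_adj_arg:
  assumes [measurable]: "deriv E \<in> borel_measurable borel" and E'_le: "\<And>x. \<bar>deriv E x\<bar> \<le> K"
    and [measurable]: "w \<in> borel_measurable borel" and w_L2: "integrable lborel (\<lambda>x. (w x)\<^sup>2)"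
    and [measurable]: "f \<in> borel_measurable borel" and g_L2: "L2S g"
  shows "L2S (adj_arg E w f g)"
proof -
  have [measurable]: "g \<in> borel_measurable borel"
    using g_L2 by (simp add: L2S_def)
  let ?c = "ennreal ((K / 2)\<^sup>2) * (\<integral>\<^sup>+x. (w x)\<^sup>2 \<partial>lborel)"
  define D where "D p = indicator {-1..1} (fst p) * (?c * (\<integral>\<^sup>+r. (g (r, snd p))\<^sup>2 \<partial>lborel))"
    for p :: "real \<times> real"
  have D_measurable: "D \<in> borel_measurable (lborel \<Otimes>\<^sub>M lborel)"
    and g_square: "(\<lambda>q. ennreal ((g q)\<^sup>2)) \<in> borel_measurable (lborel \<Otimes>\<^sub>M lborel)"
    unfolding D_def lborel_prod measurable_lborel2 by measurable
  have "(\<integral>\<^sup>+p. (adj_arg E w f g p)\<^sup>2 \<partial>lborel) \<le> (\<integral>\<^sup>+p. D p \<partial>lborel)"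
    using square_adj_arg_le[OF E'_le] by (intro nn_integral_mono) (auto simp: D_def)
  also have "\<dots> = (\<integral>\<^sup>+s. \<integral>\<^sup>+\<theta>. D (s, \<theta>) \<partial>lborel \<partial>lborel)"
    using lborel.nn_integral_fst[OF D_measurable] by (simp add: lborel_prod)
  also have "\<dots> = (\<integral>\<^sup>+s. indicator {-1..1::real} s * (?c * (\<integral>\<^sup>+q. (g q)\<^sup>2 \<partial>lborel)) \<partial>lborel)"
    using lborel_pair.nn_integral_snd[OF g_square] by (simp add: D_def nn_integral_cmult lborel_prod)
  also have "\<dots> = 2 * (?c * (\<integral>\<^sup>+q. (g q)\<^sup>2 \<partial>lborel))"
    by (simp add: nn_integral_multc)
  also have "\<dots> < \<infinity>"
    using w_L2 g_L2 by (simp add: L2S_def integrable_iff_bounded ennreal_mult_less_top)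
  finally have "(\<integral>\<^sup>+p. (adj_arg E w f g p)\<^sup>2 \<partial>lborel) < \<infinity>" .
  moreover have "(\<lambda>p. (adj_arg E w f g p)\<^sup>2) \<in> borel_measurable borel"
    by measurable
  moreover have "adj_arg E w f g p = 0" if "p \<notin> OmegaS" for p
    using that by (cases p) (simp add: adj_arg_def)
  ultimately show ?thesis
    by (simp add: L2S_def integrable_iff_bounded)
qed

definition Fderiv_kernel ::
  "(real \<Rightarrow> real) \<Rightarrow> (real \<Rightarrow> real) \<Rightarrow> (real \<times> real \<Rightarrow> real) \<Rightarrow> (real \<times> real \<Rightarrow> real) \<Rightarrow>
    (real \<times> real \<Rightarrow> real) \<Rightarrow> real \<Rightarrow> real \<Rightarrow> real \<Rightarrow> real" where
  "Fderiv_kernel E w f h g \<theta> s r =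
    w (r - s) * ((1/2) * deriv E ((1/2) * Radon f (r, \<theta>)) * Radon h (r, \<theta>)) * g (s, \<theta>)"

lemma L2S_vanishes: "L2S g \<Longrightarrow> p \<notin> OmegaS \<Longrightarrow> g p = 0"
  by (cases p) (simp add: L2S_def)

lemma innerS_Fderiv_eq_integral_kernel:
  assumes "L2S g"
  shows "innerS (Fderiv E w f h) g = integral\<^sup>L lborel (\<lambda>(s, \<theta>). \<integral>r. Fderiv_kernel E w f h g \<theta> s r \<partial>lborel)"
  unfolding innerS_def set_lebesgue_integral_def
proof (intro Bochner_Integration.integral_cong refl)
  fix p :: "real \<times> real"
  show "indicator OmegaS p *\<^sub>R (Fderiv E w f h p * g p)
      = (\<lambda>(s, \<theta>). \<integral>r. Fderiv_kernel E w f h g \<theta> s r \<partial>lborel) p"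
    using L2S_vanishes[OF assms, of p]
    by (cases p) (auto simp: Fderiv_def Fderiv_kernel_def mult_ac)
qed

lemma innerS_Radon_adj_arg_eq_integral_kernel:
  assumes "L2S g"
  shows "innerS (Radon h) (adj_arg E w f g) = integral\<^sup>L lborel (\<lambda>(r, \<theta>). \<integral>s. Fderiv_kernel E w f h g \<theta> s r \<partial>lborel)"
  unfolding innerS_def set_lebesgue_integral_def
proof (intro Bochner_Integration.integral_cong refl)
  fix p :: "real \<times> real"
  show "indicator OmegaS p *\<^sub>R (Radon h p * adj_arg E w f g p)
      = (\<lambda>(r, \<theta>). \<integral>s. Fderiv_kernel E w f h g \<theta> s r \<partial>lborel) p"
  proof (cases p)
    case (Pair r \<theta>)
    have "g (s, \<theta>) = 0" if "s \<notin> {-1..1}" for s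
      using that by (intro L2S_vanishes[OF assms]) (auto simp: OmegaS_def)
    then have "(LINT s:{-1..1}|lborel. w (r - s) * g (s, \<theta>)) = (\<integral>s. w (r - s) * g (s, \<theta>) \<partial>lborel)"
      unfolding set_lebesgue_integral_def
      by (intro Bochner_Integration.integral_cong) (auto simp: indicator_def)
    moreover have "(\<integral>s. Fderiv_kernel E w f h g \<theta> s r \<partial>lborel)
        = (1/2) * deriv E ((1/2) * Radon f (r, \<theta>)) * Radon h (r, \<theta>) * (\<integral>s. w (r - s) * g (s, \<theta>) \<partial>lborel)"
      unfolding Fderiv_kernel_def integral_mult_right_zero[symmetric] by (simp add: mult_ac)
    ultimately show ?thesis
      by (auto simp: Pair adj_arg_def Radon_eq mult_ac)
  qed
qed

lemma nn_integral_abs_Fderiv_kernel_finite: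
  assumes [measurable]: "deriv E \<in> borel_measurable borel" and E'_le: "\<And>x. \<bar>deriv E x\<bar> \<le> K"
    and [measurable]: "w \<in> borel_measurable borel" and w_L2: "integrable lborel (\<lambda>x. (w x)\<^sup>2)"
    and [measurable]: "f \<in> borel_measurable borel" and h_L2: "L2D h" and g_L2: "L2S g"
  shows "(\<integral>\<^sup>+\<theta>. \<integral>\<^sup>+s. \<integral>\<^sup>+r. \<bar>Fderiv_kernel E w f h g \<theta> s r\<bar> \<partial>lborel \<partial>lborel \<partial>lborel) < \<infinity>"
proof -
  have [measurable]: "h \<in> borel_measurable borel" "g \<in> borel_measurable borel"
    using h_L2 g_L2 by (simp_all add: L2D_def L2S_def)
  define a where "a p = (1/2) * deriv E ((1/2) * Radon f p) * Radon h p" for p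
  have "(\<integral>\<^sup>+p. (a p)\<^sup>2 \<partial>lborel) \<le> (\<integral>\<^sup>+p. ennreal ((K / 2)\<^sup>2) * (Radon h p)\<^sup>2 \<partial>lborel)"
    unfolding a_def using E'_le by (intro nn_integral_mono ennreal_square_mult_le) simp
  also have "\<dots> \<le> ennreal ((K / 2)\<^sup>2) * (ennreal (4 * pi) * (\<integral>\<^sup>+x. (h x)\<^sup>2 \<partial>lborel))"
    using nn_integral_square_Radon_le[OF h_L2] by (simp add: nn_integral_cmult mult_left_mono)
  also have "\<dots> < \<infinity>"
    using h_L2 by (simp add: L2D_def integrable_iff_bounded ennreal_mult_less_top)
  finally have "(\<integral>\<^sup>+p. (a p)\<^sup>2 \<partial>lborel) < \<infinity>" .
  moreover have "a \<in> borel_measurable borel"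
    unfolding a_def by measurable
  moreover have "a (r, \<theta>) = 0" if "r \<notin> {-1..1}" for r \<theta>
    using that by (auto simp: a_def Radon_eq OmegaS_def)
  ultimately show ?thesis
    unfolding Fderiv_kernel_def a_def[symmetric] using w_L2 g_L2
    by (intro nn_integral_lborel_convolution_product_finite[where A="{-1..1}"])
      (simp_all add: integrable_iff_bounded L2S_def)
qed

lemma innerS_Fderiv_eq_innerS_Radon_adj_arg:
  assumes [measurable]: "deriv E \<in> borel_measurable borel" and E'_le: "\<And>x. \<bar>deriv E x\<bar> \<le> K"
    and [measurable]: "w \<in> borel_measurable borel" and w_L2: "integrable lborel (\<lambda>x. (w x)\<^sup>2)"
    and [measurable]: "f \<in> borel_measurable borel" and h_L2: "L2D h" and g_L2: "L2S g"
  shows "innerS (Fderiv E w f h) g = innerS (Radon h) (adj_arg E w f g)"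
proof -
  have [measurable]: "h \<in> borel_measurable borel" "g \<in> borel_measurable borel"
    using h_L2 g_L2 by (simp_all add: L2D_def L2S_def)
  have kernel_measurable: "(\<lambda>(\<theta>, s, r). Fderiv_kernel E w f h g \<theta> s r) \<in> borel_measurable borel"
    unfolding Fderiv_kernel_def case_prod_beta' by measurable
  have "innerS (Fderiv E w f h) g = integral\<^sup>L lborel (\<lambda>(s, \<theta>). \<integral>r. Fderiv_kernel E w f h g \<theta> s r \<partial>lborel)"
    by (rule innerS_Fderiv_eq_integral_kernel[OF g_L2])
  also have "\<dots> = integral\<^sup>L lborel (\<lambda>(r, \<theta>). \<integral>s. Fderiv_kernel E w f h g \<theta> s r \<partial>lborel)"
    by (rule integral_lborel_partial_integral_swap[OF kernel_measurable
          nn_integral_abs_Fderiv_kernel_finite[OF assms]])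
  also have "\<dots> = innerS (Radon h) (adj_arg E w f g)"
    by (rule innerS_Radon_adj_arg_eq_integral_kernel[OF g_L2, symmetric])
  finally show ?thesis .
qed

theorem proposition3:
  fixes E w :: "real \<Rightarrow> real"
    and Rstar :: "(real \<times> real \<Rightarrow> real) \<Rightarrow> (real \<times> real \<Rightarrow> real)"
    and f :: "real \<times> real \<Rightarrow> real"
  assumes E_diff: "\<forall>x. E differentiable (at x)"
    and E'_diff: "\<forall>x. deriv E differentiable (at x)"
    and E''_cont: "continuous_on UNIV (deriv (deriv E))"
    and E_exp: "\<forall>x\<ge>0. E x = exp (- x)"
    and E_bdd: "bounded (range E)"
    and E'_bdd: "bounded (range (deriv E))"
    and E''_bdd: "bounded (range (deriv (deriv E)))"
    and w_meas: "w \<in> borel_measurable lborel"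
    and w_L1: "integrable lborel w"
    and w_L2: "integrable lborel (\<lambda>x. (w x)\<^sup>2)"
    and Rstar_adj: "is_adjoint Radon Rstar"
    and f_L2: "L2D f"
  shows "is_adjoint (Fderiv E w f) (\<lambda>g. Rstar (adj_arg E w f g))"
proof -
  have "continuous_on UNIV (deriv E)"
    using E'_diff by (simp add: continuous_at_imp_continuous_on differentiable_imp_continuous_within)
  then have E'_measurable: "deriv E \<in> borel_measurable borel"
    by (rule borel_measurable_continuous_onI)
  obtain K where E'_le: "\<And>x. \<bar>deriv E x\<bar> \<le> K"
    using E'_bdd unfolding bounded_iff by auto
  have w_measurable: "w \<in> borel_measurable borel" and f_measurable: "f \<in> borel_measurable borel"
    using w_meas f_L2 by (simp_all add: L2D_def)
  note adj_arg_L2S = L2S_adj_arg[OF E'_measurable E'_le w_measurable w_L2 f_measurable]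
  show ?thesis
    unfolding is_adjoint_def
  proof (intro conjI allI impI)
    fix g
    assume "L2S g"
    then show "L2D (Rstar (adj_arg E w f g))"
      using Rstar_adj adj_arg_L2S by (simp add: is_adjoint_def)
  next
    fix h g
    assume "L2D h" "L2S g"
    then have "innerS (Fderiv E w f h) g = innerS (Radon h) (adj_arg E w f g)"
      by (rule innerS_Fderiv_eq_innerS_Radon_adj_arg[OF E'_measurable E'_le w_measurable w_L2 f_measurable])
    also have "\<dots> = innerD h (Rstar (adj_arg E w f g))"
      using Rstar_adj \<open>L2D h\<close> adj_arg_L2S[OF \<open>L2S g\<close>] by (simp add: is_adjoint_def)
    finally show "innerS (Fderiv E w f h) g = innerD h (Rstar (adj_arg E w f g))" .
  qed
qed

end
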